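(* Let $q=2^m$ with $m$ a positive integer. Let $\delta\in\mathbb{F}_{q^2}$, $b_1,b_2\in\mathbb{F}_q$ and $b_3\in\mathbb{F}_{q^2}$. Let $i$ be a non-negative integer with $i<2m$, let $j$ be the integer with $0\leq j<m$ and $j\equiv i\pmod m$, and let $d=\gcd(m,j)$. Let $$P(x)=b_1(x^q+x+\delta)^{2^i+q}+b_2(x^q+x+\delta)^{2^i+1}+b_3(x^q+x+\delta)^{2^i}+x,$$ and put $$A=(\delta+\delta^q)(b_1+b_2)+b_3+b_3^q,\quad B=1+(\delta^{2^iq}+\delta^{2^i})(b_1+b_2),$$ $$C=b_1(\delta^{2^iq+1}+\delta^{2^i+q})+b_2(\delta^{2^iq+q}+\delta^{2^i+1})+b_3^q\delta^{2^iq}+b_3\delta^{2^i}.$$ For $y$ define $G(y)=b_1y^{2^i+q}+b_2y^{2^i+1}+b_3y^{2^i}$. Then: (1) If $i\in\{0,m\}$, then $P$ permutes $\mathbb{F}_{q^2}$ if and only if $A+B\neq0$, and in that case $P^{-1}(x)=G\!\left((A+B)^{-1}(x^q+x)+(A+B)^{-1}C+\delta\right)+x$. (2) If $i\notin\{0,m\}$, $A=0$ and $B\neq0$, then $P$ permutes $\mathbb{F}_{q^2}$ and $P^{-1}(x)=G\!\left(B^{-1}(x^q+x)+B^{-1}C+\delta\right)+x$. (3) If $i\notin\{0,m\}$, $A\neq0$ and $B=0$, then $P$ permutes $\mathbb{F}_{q^2}$ and $P^{-1}(x)=G\!\left(A^{-2^{m-j}}(x^q+x)^{2^{m-j}}+(C/A)^{2^{m-j}}+\delta\right)+x$.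 (4) If $i\notin\{0,m\}$ and $AB\neq0$, then $P$ permutes $\mathbb{F}_{q^2}$ if and only if $N_{2^m/2^d}(B/A)\neq1$, and in that case $$P^{-1}(x)=G\!\left(\delta+\frac{N_{2^m/2^d}(B/A)}{1+N_{2^m/2^d}(B/A)}\sum_{k=0}^{m/d-1}\left(\frac{A}{B}\right)^{\frac{2^{(k+1)j}-1}{2^j-1}}\left(\frac{x^q+x}{A}+\frac{C}{A}\right)^{2^{kj}}\right)+x.$$
   Context: For $a\in\mathbb{F}_{2^m}$ and $d\mid m$, $N_{2^m/2^d}(a)=a^{(2^m-1)/(2^d-1)}$ is the norm to $\mathbb{F}_{2^d}$. The compositional inverse of a permutation polynomial $f$ of $\mathbb{F}_{Q}$ is the unique polynomial $f^{-1}$ (modulo $x^Q-x$) with $f(f^{-1}(c))=f^{-1}(f(c))=c$ for all $c\in\mathbb{F}_Q$. The auxiliary notation $G$ is only shorthand for writing out the three-term expression. *)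

theory Defs
  imports Main
begin

definition gf_norm :: "nat \<Rightarrow> nat \<Rightarrow> 'a::field \<Rightarrow> 'a" where
  "gf_norm m d a = a ^ ((2^m - 1) div (2^d - 1))"

definition is_comp_inverse :: "('a \<Rightarrow> 'a) \<Rightarrow> ('a \<Rightarrow> 'a) \<Rightarrow> bool" where
  "is_comp_inverse f g \<longleftrightarrow> (\<forall>c. f (g c) = c \<and> g (f c) = c)"

end

theory Submission
  imports Defs "HOL-Number_Theory.Residues" "HOL-Computational_Algebra.Polynomial"
begin

(* Write T x = x^q + x for the trace of F_{q^2} over F_q, so that P x = G (T x + delta) + x.
   A direct computation in characteristic 2 gives T (G (z + delta)) = A z^(2^i) + (B + 1) z + C
   for z in F_q, hence T (P x) = L (T x) + C with the additive map L z = A z^(2^i) + B z on F_q.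
   Consequently, if S is a map into F_q with L (S c) + C = T c, then c |-> G (S c + delta) + c
   is a right inverse of P, so P is a permutation with that inverse; conversely, if P is a
   permutation then L is injective on F_q.  On F_q we have z^(2^i) = z^(2^j), so L is a scalar
   when i is 0 or m or when A = 0, and is inverted by a 2^(m-j)-th power when B = 0.  If A B is
   nonzero, L has a nonzero root iff B/A = z^(2^j - 1) for some nonzero z in F_q; counting the
   image of z |-> z^(2^j - 1) shows that this happens iff N(B/A) = 1.  When N(B/A) is not 1,
   the twisted sum in the statement solves L z = A v, because its terms g_k satisfy
   g_k^(2^j) = (B/A) g_(k+1) and the sum telescopes. *)

lemma card_roots_power_eq_le:
  fixes c :: "'a::idom"
  assumes "0 < n"
  shows "card {x. x ^ n = c} \<le> n"
proof -
  let ?p = "monom 1 n + [:-c:]"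
  have deg: "degree ?p = n"
    using assms by (simp add: degree_add_eq_left degree_monom_eq)
  then have "?p \<noteq> 0" using assms by auto
  then have "card {x. poly ?p x = 0} \<le> degree ?p" by (rule card_poly_roots_bound)
  moreover have "{x. poly ?p x = 0} = {x. x ^ n = c}" by (auto simp: poly_monom)
  ultimately show ?thesis using deg by simp
qed

lemma card_le_card_image_mult:
  assumes "finite A" and "\<And>y. y \<in> f ` A \<Longrightarrow> card {x\<in>A. f x = y} \<le> k"
  shows "card A \<le> card (f ` A) * k"
proof -
  have "A = (\<Union>y\<in>f ` A. {x\<in>A. f x = y})" by blast
  then have "card A \<le> (\<Sum>y\<in>f ` A. card {x\<in>A. f x = y})"
    using card_UN_le[of "f ` A" "\<lambda>y. {x\<in>A. f x = y}"] assms(1) by simp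
  also have "\<dots> \<le> (\<Sum>y\<in>f ` A. k)" by (intro sum_mono assms(2))
  finally show ?thesis by simp
qed

(* finite_field_power_card_eq_same in the library requires the type class finite_field. *)
lemma field_power_card_UNIV:
  fixes x :: "'a::{field,finite}"
  shows "x ^ card (UNIV :: 'a set) = x"
proof (cases "x = 0")
  case False
  have "(\<Prod>y\<in>UNIV-{0}. x * y) = (\<Prod>y\<in>UNIV-{0}. y)"
    by (rule prod.reindex_bij_witness[of _ "\<lambda>y. y / x" "\<lambda>y. x * y"]) (use False in auto)
  moreover have "(\<Prod>y\<in>UNIV-{0}. x * y) = x ^ (card (UNIV :: 'a set) - 1) * (\<Prod>y\<in>UNIV-{0}. y)"
    by (simp add: prod.distrib)
  ultimately have "x ^ (card (UNIV :: 'a set) - 1) = 1" by simp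
  moreover have "card (UNIV :: 'a set) = Suc (card (UNIV :: 'a set) - 1)"
    using finite_UNIV_card_ge_0[where ?'a = 'a] by simp
  ultimately show ?thesis by (metis power_Suc2 mult_1_left)
qed (use finite_UNIV_card_ge_0[where ?'a = 'a] in auto)

lemma power_fixed_iterate:
  fixes z :: "'a::monoid_mult"
  assumes "z ^ (p ^ b) = z"
  shows "z ^ (p ^ (k * b)) = z"
proof (induction k)
  case (Suc k)
  have "z ^ (p ^ (Suc k * b)) = (z ^ (p ^ (k * b))) ^ (p ^ b)"
    by (simp add: power_add power_mult[symmetric] mult.commute)
  then show ?case using Suc assms by simp
qed simp

lemma power_fixed_exp_mod:
  fixes z :: "'a::monoid_mult"
  assumes "z ^ (p ^ b) = z"
  shows "z ^ (p ^ a) = z ^ (p ^ (a mod b))"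
proof -
  have "z ^ (p ^ a) = (z ^ (p ^ (a div b * b))) ^ (p ^ (a mod b))"
    by (metis div_mult_mod_eq power_add power_mult)
  then show ?thesis using power_fixed_iterate[OF assms] by simp
qed

lemma power_fixed_exp_gcd:
  fixes z :: "'a::monoid_mult"
  shows "z ^ (p ^ a) = z \<Longrightarrow> z ^ (p ^ b) = z \<Longrightarrow> z ^ (p ^ gcd a b) = z"
proof (induction a b rule: gcd_nat_induct)
  case (step a b)
  then have "z ^ (p ^ gcd b (a mod b)) = z" using power_fixed_exp_mod[of z p b a] by simp
  then show ?case by (metis gcd.commute gcd_red_nat)
qed simp

lemma power_two_pow_split: "x ^ 2 ^ k = x ^ (2 ^ k - 1) * (x::'a::monoid_mult)"
  by (metis One_nat_def Suc_pred pos2 power_Suc2 zero_less_power)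

lemma geometric_sum_nat: "(\<Sum>l<k. x ^ l) * (x - 1) = x ^ k - (1::nat)"
proof (cases "x = 0")
  case False
  then show ?thesis
  proof (induction k)
    case (Suc k)
    have "1 \<le> x ^ k" using False by simp
    with Suc show ?case by (simp add: algebra_simps diff_mult_distrib2)
  qed simp
qed (simp add: power_0_left)

lemma sum_power_mult_eq_div:
  fixes p :: nat
  assumes "1 < p" "0 < c"
  shows "(p ^ (k * c) - 1) div (p ^ c - 1) = (\<Sum>l<k. p ^ (l * c))"
proof -
  have "0 < p ^ c - 1" using one_less_power[OF assms] by simp
  moreover have "p ^ (k * c) - 1 = (\<Sum>l<k. p ^ (l * c)) * (p ^ c - 1)"
    using geometric_sum_nat[where x = "p ^ c" and k = k] by (simp add: power_mult[symmetric] mult.commute)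
  ultimately show ?thesis by (simp only: div_mult_self_is_m)
qed

lemma power_pred_dvd_power_pred:
  fixes p :: nat
  assumes "d dvd j"
  shows "(p ^ d - 1) dvd (p ^ j - 1)"
proof -
  obtain k where "j = d * k" using assms by blast
  then have "p ^ j - 1 = (p ^ d) ^ k - 1" by (simp add: power_mult)
  also have "\<dots> = (\<Sum>l<k. (p ^ d) ^ l) * (p ^ d - 1)" by (rule geometric_sum_nat[symmetric])
  finally show ?thesis by simp
qed

lemma mod_neq_0_if_below_double:
  fixes i m :: nat
  assumes "i < 2 * m" "i \<notin> {0, m}"
  shows "i mod m \<noteq> 0"
proof
  assume "i mod m = 0"
  then obtain k where "i = m * k" by auto
  with assms(1) have "k < 2" by simp
  then show False using assms(2) \<open>i = m * k\<close> by (auto simp: less_2_cases_iff)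
qed

lemma bij_betw_mult_mod:
  fixes a n :: nat
  assumes "coprime a n"
  shows "bij_betw (\<lambda>l. l * a mod n) {..<n} {..<n}"
proof (cases "n = 0")
  case False
  have "inj_on (\<lambda>l. l * a mod n) {..<n}"
  proof (rule inj_onI)
    fix l l' assume "l \<in> {..<n}" "l' \<in> {..<n}" "l * a mod n = l' * a mod n"
    then show "l = l'"
      using cong_mult_rcancel_nat[OF assms] by (auto simp: cong_def intro: cong_less_modulus_unique_nat)
  qed
  moreover have "(\<lambda>l. l * a mod n) ` {..<n} \<subseteq> {..<n}" using False by auto
  ultimately show ?thesis by (simp add: bij_betw_def endo_inj_surj)
qed (simp add: bij_betw_def)

lemma gf_norm_eq_power_twisted_sum:
  fixes a :: "'a::field"
  assumes "0 < m" and a: "a ^ (2 ^ m) = a"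
  shows "a ^ (\<Sum>l<m div gcd m j. 2 ^ (l * j)) = gf_norm m (gcd m j) a"
proof -
  define d where "d = gcd m j"
  define n where "n = m div d"
  obtain j' where j: "j = j' * d" using gcd_dvd2[of m j] unfolding d_def by (metis dvd_div_mult_self)
  have d: "0 < d" and m: "m = n * d" using assms(1) unfolding d_def n_def by auto
  have "j div d = j'" using j d by simp
  then have "coprime j' n"
    using div_gcd_coprime[of m j] assms(1) unfolding d_def n_def by (simp add: coprime_commute)
  have exp: "a ^ (2 ^ (l * j)) = a ^ (2 ^ ((l * j' mod n) * d))" for l
  proof -
    have "(l * j) mod m = (l * j' mod n) * d" unfolding j m by (simp add: mult.assoc mod_mult_mult2)
    then show ?thesis using power_fixed_exp_mod[OF a, of "l * j"] by simp
  qed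
  have "a ^ (\<Sum>l<n. 2 ^ (l * j)) = (\<Prod>l<n. a ^ (2 ^ ((l * j' mod n) * d)))"
    by (simp only: power_sum exp)
  also have "\<dots> = (\<Prod>k<n. a ^ (2 ^ (k * d)))"
    using prod.reindex_bij_betw[OF bij_betw_mult_mod[OF \<open>coprime j' n\<close>], of "\<lambda>k. a ^ (2 ^ (k * d))"]
    by simp
  also have "\<dots> = a ^ (\<Sum>k<n. 2 ^ (k * d))" by (simp only: power_sum)
  also have "(\<Sum>k<n. 2 ^ (k * d)) = ((2::nat) ^ m - 1) div (2 ^ d - 1)"
    unfolding m by (rule sum_power_mult_eq_div[symmetric, OF _ d]) simp
  finally show ?thesis unfolding gf_norm_def d_def n_def .
qed

section \<open>Fields of order 4 ^ m\<close>

locale gf_q_squared =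
  fixes m :: nat
  assumes m_pos: "0 < m"
    and card_UNIV: "card (UNIV :: 'a::{field,finite} set) = 2 ^ (2 * m)"
begin

abbreviation q :: nat where "q \<equiv> 2 ^ m"

lemma CHAR_eq_2: "CHAR('a) = 2"
proof -
  have p: "prime CHAR('a)" by (simp add: finite_imp_CHAR_pos prime_CHAR_semidom)
  moreover have "CHAR('a) dvd 2 ^ (2 * m)" using CHAR_dvd_CARD card_UNIV by metis
  ultimately have "CHAR('a) dvd 2" using prime_dvd_power by blast
  then show ?thesis using p by (simp add: primes_dvd_imp_eq)
qed

lemma add_self [simp]: "x + x = (0::'a)"
  using uminus_CHAR_2[OF CHAR_eq_2, of x] by (metis add.right_inverse)

lemma two_eq_0 [simp]: "(2::'a) = 0"
  using add_self[of 1] by (simp only: one_add_one)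

lemma minus_eq_add: "x - y = x + (y::'a)"
  by (rule minus_CHAR_2[OF CHAR_eq_2])

lemma add_eq_0_iff_eq: "x + y = 0 \<longleftrightarrow> x = (y::'a)"
  by (simp only: minus_eq_add[symmetric] right_minus_eq)

lemma frobenius_add: "(x + y) ^ 2 ^ k = x ^ 2 ^ k + (y::'a) ^ 2 ^ k"
  by (rule freshmans_dream') (simp_all add: CHAR_eq_2)

lemma frobenius_sum: "(\<Sum>i\<in>I. f i) ^ 2 ^ k = (\<Sum>i\<in>I. (f i :: 'a) ^ 2 ^ k)"
  by (rule freshmans_dream_sum') (simp_all add: CHAR_eq_2)

lemma q_gt_1: "1 < q"
  using one_less_power[of "2::nat" m] m_pos by simp

lemma power_q_q: "(x ^ q) ^ q = (x::'a)"
  using field_power_card_UNIV[of x] by (simp add: card_UNIV mult_2 power_add flip: power_mult)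

definition Fq :: "'a set" where "Fq = {z. z ^ q = z}"

lemma Fq_zero [simp]: "0 \<in> Fq"
  by (simp add: Fq_def)

lemma Fq_one [simp]: "1 \<in> Fq"
  by (simp add: Fq_def)

lemma Fq_add: "x \<in> Fq \<Longrightarrow> y \<in> Fq \<Longrightarrow> x + y \<in> Fq"
  by (simp add: Fq_def frobenius_add)

lemma Fq_mult: "x \<in> Fq \<Longrightarrow> y \<in> Fq \<Longrightarrow> x * y \<in> Fq"
  by (simp add: Fq_def power_mult_distrib)

lemma Fq_inverse: "x \<in> Fq \<Longrightarrow> inverse x \<in> Fq"
  by (simp add: Fq_def power_inverse)

lemma Fq_divide: "x \<in> Fq \<Longrightarrow> y \<in> Fq \<Longrightarrow> x / y \<in> Fq"
  by (simp add: Fq_def power_divide)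

lemma Fq_power: "x \<in> Fq \<Longrightarrow> x ^ k \<in> Fq"
  by (simp add: Fq_def flip: power_mult) (metis mult.commute power_mult)

lemma Fq_sum: "(\<And>i. i \<in> I \<Longrightarrow> f i \<in> Fq) \<Longrightarrow> (\<Sum>i\<in>I. f i) \<in> Fq"
  by (simp add: Fq_def frobenius_sum)

lemmas Fq_closed = Fq_zero Fq_one Fq_add Fq_mult Fq_inverse Fq_divide Fq_power Fq_sum

lemma Fq_power_exp_mod: "z \<in> Fq \<Longrightarrow> z ^ 2 ^ i = z ^ 2 ^ (i mod m)"
  unfolding Fq_def by (intro power_fixed_exp_mod) simp

lemma Fq_power_trivial: "i \<in> {0, m} \<Longrightarrow> \<forall>z\<in>Fq. z ^ 2 ^ i = z"
  by (auto simp: Fq_def)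

lemma Fq_power_q_pred:
  assumes "z \<in> Fq" "z \<noteq> 0"
  shows "z ^ (q - 1) = 1"
proof -
  have "z ^ (q - 1) * z = z ^ Suc (q - 1)" by (rule power_Suc2[symmetric])
  also have "Suc (q - 1) = q" by simp
  also have "z ^ q = z" using assms(1) by (simp add: Fq_def)
  finally show ?thesis using assms(2) by simp
qed

lemma card_Fq_le: "card Fq \<le> q"
proof -
  have "Fq \<subseteq> insert 0 {z. z ^ (q - 1) = 1}" using Fq_power_q_pred by auto
  then have "card Fq \<le> card (insert 0 {z::'a. z ^ (q - 1) = 1})" by (intro card_mono) auto
  also have "\<dots> \<le> Suc (card {z::'a. z ^ (q - 1) = 1})" by (simp add: card_insert_if)
  also have "\<dots> \<le> q" using card_roots_power_eq_le[where n = "q - 1" and c = "1::'a"] q_gt_1 by simp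
  finally show ?thesis .
qed

definition trace :: "'a \<Rightarrow> 'a" where "trace x = x ^ q + x"

lemma trace_add: "trace (x + y) = trace x + trace y"
  by (simp add: trace_def frobenius_add ac_simps)

lemma trace_in_Fq: "trace x \<in> Fq"
  by (simp add: Fq_def trace_def frobenius_add power_q_q add.commute)

lemma trace_eq_0_iff: "trace x = 0 \<longleftrightarrow> x \<in> Fq"
  by (simp add: trace_def Fq_def add_eq_0_iff_eq)

lemma range_trace: "range trace = Fq" and card_Fq: "card Fq = q"
proof -
  have fibre: "card {x. trace x = y} \<le> card Fq" if y_in: "y \<in> range trace" for y
  proof -
    obtain x0 where y: "y = trace x0" using y_in by auto
    have "inj_on (\<lambda>x. x + x0) {x. trace x = y}" by (auto simp: inj_on_def)
    moreover have "(\<lambda>x. x + x0) ` {x. trace x = y} \<subseteq> Fq"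
      using y by (auto simp: trace_add simp flip: trace_eq_0_iff)
    ultimately show ?thesis by (intro card_inj_on_le) auto
  qed
  have "q * q \<le> card (range trace) * card Fq"
    using card_le_card_image_mult[of UNIV trace] fibre card_UNIV
    by (simp add: mult_2 power_add)
  moreover have range_le: "card (range trace) \<le> card Fq"
    using trace_in_Fq by (intro card_mono) auto
  ultimately have "q\<^sup>2 \<le> (card Fq)\<^sup>2"
    by (metis le_trans mult_le_mono1 power2_eq_square)
  then show card_q: "card Fq = q"
    using card_Fq_le power2_le_imp_le[of q "card Fq"] by simp
  then have "q * q \<le> card (range trace) * q"
    using \<open>q * q \<le> card (range trace) * card Fq\<close> by simp
  then have "card (range trace) = card Fq"
    using range_le card_q by simp
  then show "range trace = Fq"
    using trace_in_Fq by (intro card_subset_eq) auto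
qed

lemma trace_power_form:
  fixes b1 b2 b3 \<delta> z :: 'a
  assumes b: "b1 \<in> Fq" "b2 \<in> Fq" and z: "z \<in> Fq"
  shows "trace (b1 * (z + \<delta>) ^ (2 ^ i + q) + b2 * (z + \<delta>) ^ (2 ^ i + 1) + b3 * (z + \<delta>) ^ 2 ^ i)
    = ((\<delta> + \<delta> ^ q) * (b1 + b2) + b3 + b3 ^ q) * z ^ 2 ^ i
      + (\<delta> ^ (2 ^ i * q) + \<delta> ^ 2 ^ i) * (b1 + b2) * z
      + (b1 * (\<delta> ^ (2 ^ i * q + 1) + \<delta> ^ (2 ^ i + q)) + b2 * (\<delta> ^ (2 ^ i * q + q) + \<delta> ^ (2 ^ i + 1))
         + b3 ^ q * \<delta> ^ (2 ^ i * q) + b3 * \<delta> ^ 2 ^ i)"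
proof -
  define Z where "Z = z ^ 2 ^ i"
  define D where "D = \<delta> ^ 2 ^ i"
  have zq: "z ^ q = z" and bq: "b1 ^ q = b1" "b2 ^ q = b2" using b z by (simp_all add: Fq_def)
  have Zq: "Z ^ q = Z" using Fq_power[OF z] by (simp add: Z_def Fq_def)
  have Dq: "D ^ q = \<delta> ^ (2 ^ i * q)" by (simp add: D_def power_mult)
  have "b1 * (z + \<delta>) ^ (2 ^ i + q) + b2 * (z + \<delta>) ^ (2 ^ i + 1) + b3 * (z + \<delta>) ^ 2 ^ i
      = (Z + D) * (b1 * (z + \<delta> ^ q) + b2 * (z + \<delta>) + b3)"
    by (simp add: power_add frobenius_add zq Z_def D_def algebra_simps)
  then have "trace (b1 * (z + \<delta>) ^ (2 ^ i + q) + b2 * (z + \<delta>) ^ (2 ^ i + 1) + b3 * (z + \<delta>) ^ 2 ^ i)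
      = (Z + D) * (b1 * (z + \<delta> ^ q) + b2 * (z + \<delta>) + b3)
        + (Z + \<delta> ^ (2 ^ i * q)) * (b1 * (z + \<delta>) + b2 * (z + \<delta> ^ q) + b3 ^ q)"
    by (simp add: trace_def frobenius_add power_mult_distrib Zq Dq zq bq power_q_q add.commute)
  also have "\<dots> = ((\<delta> + \<delta> ^ q) * (b1 + b2) + b3 + b3 ^ q) * Z
      + (\<delta> ^ (2 ^ i * q) + D) * (b1 + b2) * z
      + (b1 * (\<delta> ^ (2 ^ i * q) * \<delta> + D * \<delta> ^ q) + b2 * (\<delta> ^ (2 ^ i * q) * \<delta> ^ q + D * \<delta>)
         + b3 ^ q * \<delta> ^ (2 ^ i * q) + b3 * D) + (Z * z * (b1 + b2) + Z * z * (b1 + b2))"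
    by (simp only: algebra_simps)
  finally show ?thesis by (simp add: Z_def D_def power_add ac_simps)
qed

lemma power_form_coefficients_in_Fq:
  fixes b1 b2 b3 \<delta> :: 'a
  assumes b: "b1 \<in> Fq" "b2 \<in> Fq"
  shows "(\<delta> + \<delta> ^ q) * (b1 + b2) + b3 + b3 ^ q \<in> Fq"
    and "1 + (\<delta> ^ (2 ^ i * q) + \<delta> ^ 2 ^ i) * (b1 + b2) \<in> Fq"
    and "b1 * (\<delta> ^ (2 ^ i * q + 1) + \<delta> ^ (2 ^ i + q)) + b2 * (\<delta> ^ (2 ^ i * q + q) + \<delta> ^ (2 ^ i + 1))
         + b3 ^ q * \<delta> ^ (2 ^ i * q) + b3 * \<delta> ^ 2 ^ i \<in> Fq"
proof -
  have "(\<delta> + \<delta> ^ q) * (b1 + b2) + b3 + b3 ^ q = trace \<delta> * (b1 + b2) + trace b3"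
    by (simp add: trace_def ac_simps)
  then show "(\<delta> + \<delta> ^ q) * (b1 + b2) + b3 + b3 ^ q \<in> Fq"
    using b trace_in_Fq by (simp add: Fq_add Fq_mult)
  have "\<delta> ^ (2 ^ i * q) + \<delta> ^ 2 ^ i = trace (\<delta> ^ 2 ^ i)"
    by (simp add: trace_def power_mult)
  then show "1 + (\<delta> ^ (2 ^ i * q) + \<delta> ^ 2 ^ i) * (b1 + b2) \<in> Fq"
    using b by (simp add: Fq_add Fq_mult trace_in_Fq)
  show "b1 * (\<delta> ^ (2 ^ i * q + 1) + \<delta> ^ (2 ^ i + q)) + b2 * (\<delta> ^ (2 ^ i * q + q) + \<delta> ^ (2 ^ i + 1))
         + b3 ^ q * \<delta> ^ (2 ^ i * q) + b3 * \<delta> ^ 2 ^ i \<in> Fq"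
    using trace_power_form[OF b Fq_zero, of \<delta> i b3]
      trace_in_Fq[of "b1 * \<delta> ^ (2 ^ i + q) + b2 * \<delta> ^ (2 ^ i + 1) + b3 * \<delta> ^ 2 ^ i"]
    by (simp add: power_0_left)
qed

section \<open>Linearized binomials over the subfield\<close>

lemma gf_norm_fixed:
  assumes "a \<in> Fq" "d dvd m"
  shows "gf_norm m d a ^ 2 ^ d = gf_norm m d a"
proof (cases "a = 0")
  case True
  then show ?thesis by (simp add: gf_norm_def power_0_left)
next
  case False
  have "(2 ^ m - 1) div (2 ^ d - 1) * (2 ^ d - 1) = (2 ^ m - 1 :: nat)"
    using power_pred_dvd_power_pred[OF assms(2)] by simp
  then have "gf_norm m d a ^ (2 ^ d - 1) = a ^ (q - 1)"
    unfolding gf_norm_def by (metis power_mult)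
  also have "\<dots> = 1" using Fq_power_q_pred[OF assms(1) False] .
  finally show ?thesis
    using power_two_pow_split[of "gf_norm m d a" d] by simp
qed

lemma gf_norm_gcd_fixed:
  assumes "a \<in> Fq"
  shows "gf_norm m (gcd m j) a ^ 2 ^ j = gf_norm m (gcd m j) a"
proof -
  obtain k where k: "k * gcd m j = j" by (metis dvd_div_mult_self gcd_dvd2)
  have "gf_norm m (gcd m j) a ^ 2 ^ (k * gcd m j) = gf_norm m (gcd m j) a"
    by (rule power_fixed_iterate[OF gf_norm_fixed[OF assms gcd_dvd1]])
  then show ?thesis unfolding k .
qed

lemma twisted_sum_linearized:
  fixes a v :: 'a and j :: nat
  assumes a: "a \<in> Fq" "a \<noteq> 0" and v: "v \<in> Fq"
  defines "T \<equiv> \<Sum>k<m div gcd m j. inverse a ^ (\<Sum>l<Suc k. 2 ^ (l * j)) * v ^ 2 ^ (k * j)"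
  shows "T ^ 2 ^ j + a * T = (1 + inverse (gf_norm m (gcd m j) a)) * v"
proof -
  define n where "n = m div gcd m j"
  define e where "e k = (\<Sum>l<k. 2 ^ (l * j) :: nat)" for k
  define g where "g k = inverse a ^ e (Suc k) * v ^ 2 ^ (k * j)" for k
  have T: "T = (\<Sum>k<n. g k)" unfolding T_def n_def g_def e_def ..
  have e_Suc: "e (Suc k) = 1 + 2 ^ j * e k" for k
    unfolding e_def sum.lessThan_Suc_shift by (simp add: sum_distrib_left power_add)
  have inv_a_e_Suc: "inverse a ^ e (Suc k) = inverse a * (inverse a ^ e k) ^ 2 ^ j" for k
    unfolding e_Suc by (simp add: power_add power_mult mult.commute)
  have g_frobenius: "g k ^ 2 ^ j = a * g (Suc k)" for k
    using a(2)
    by (simp add: g_def inv_a_e_Suc[of "Suc k"] power_mult_distrib power_add mult.commute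
        power_mult[symmetric] mult.left_commute)
  have g_0: "g 0 = inverse a * v"
    by (simp add: g_def e_def)
  have "v ^ 2 ^ (n * j) = v"
  proof -
    have "n * j = (j div gcd m j) * m" unfolding n_def
      by (metis dvd_div_mult dvd_div_mult_self gcd_dvd1 gcd_dvd2 mult.commute)
    then show ?thesis using v power_fixed_iterate[of v 2 m] by (simp add: Fq_def)
  qed
  moreover have "inverse a ^ e n = inverse (gf_norm m (gcd m j) a)"
    using gf_norm_eq_power_twisted_sum[OF m_pos, of a j] a(1)
    by (simp add: e_def n_def Fq_def power_inverse)
  moreover have "inverse (gf_norm m (gcd m j) a) ^ 2 ^ j = inverse (gf_norm m (gcd m j) a)"
    by (simp add: power_inverse gf_norm_gcd_fixed[OF a(1)])
  ultimately have g_n: "g n = inverse a * inverse (gf_norm m (gcd m j) a) * v"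
    by (simp add: g_def inv_a_e_Suc)
  have "T ^ 2 ^ j + a * T = a * ((\<Sum>k<n. g (Suc k)) + (\<Sum>k<n. g k))"
    by (simp add: T frobenius_sum g_frobenius sum_distrib_left distrib_left)
  also have "(\<Sum>k<n. g (Suc k)) + (\<Sum>k<n. g k) = g n + g 0"
    using sum_lessThan_telescope[of g n] by (simp add: minus_eq_add sum.distrib)
  also have "a * (g n + g 0) = (1 + inverse (gf_norm m (gcd m j) a)) * v"
    using a(2) by (simp add: g_n g_0 field_simps)
  finally show ?thesis .
qed

lemma linearized_binomial_solution:
  fixes a v :: 'a and j :: nat
  assumes a: "a \<in> Fq" "a \<noteq> 0" and v: "v \<in> Fq" and j: "0 < j"
    and N_neq_1: "gf_norm m (gcd m j) a \<noteq> 1"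
  defines "N \<equiv> gf_norm m (gcd m j) a"
  defines "z \<equiv> N / (1 + N) * (\<Sum>k<m div gcd m j.
                 inverse a ^ ((2 ^ ((k + 1) * j) - 1) div (2 ^ j - 1)) * v ^ 2 ^ (k * j))"
  shows "z \<in> Fq" and "z ^ 2 ^ j + a * z = v"
proof -
  define T where "T = (\<Sum>k<m div gcd m j. inverse a ^ (\<Sum>l<Suc k. 2 ^ (l * j)) * v ^ 2 ^ (k * j))"
  have "(2 ^ ((k + 1) * j) - 1) div (2 ^ j - 1) = (\<Sum>l<Suc k. 2 ^ (l * j) :: nat)" for k
    using sum_power_mult_eq_div[OF _ j, of 2 "Suc k"] by simp
  then have "z = N / (1 + N) * T" unfolding z_def T_def by (simp only:)
  have N_Fq: "N \<in> Fq" unfolding N_def gf_norm_def using a(1) by (rule Fq_power)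
  show "z \<in> Fq"
    unfolding z_def using a v N_Fq by (intro Fq_closed) auto
  have "N \<noteq> 0" using a(2) by (simp add: N_def gf_norm_def)
  have "1 + N \<noteq> 0" using N_neq_1 add_eq_0_iff_eq[of 1 N] by (auto simp: N_def)
  have "N ^ 2 ^ j = N" unfolding N_def by (rule gf_norm_gcd_fixed[OF a(1)])
  then have c_fixed: "(N / (1 + N)) ^ 2 ^ j = N / (1 + N)" by (simp add: power_divide frobenius_add)
  have "z ^ 2 ^ j + a * z = N / (1 + N) * (T ^ 2 ^ j + a * T)"
    unfolding \<open>z = N / (1 + N) * T\<close>
    by (simp only: power_mult_distrib c_fixed distrib_left mult.left_commute)
  also have "T ^ 2 ^ j + a * T = (1 + inverse N) * v"
    unfolding T_def N_def by (rule twisted_sum_linearized[OF a v])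
  also have "1 + inverse N = (1 + N) / N"
    using \<open>N \<noteq> 0\<close> by (simp add: field_simps)
  also have "N / (1 + N) * ((1 + N) / N * v) = v"
    using \<open>N \<noteq> 0\<close> \<open>1 + N \<noteq> 0\<close> by simp
  finally show "z ^ 2 ^ j + a * z = v" .
qed

lemma Fq_power_pred_eq_1_gcd:
  assumes "w \<in> Fq" "w \<noteq> 0" "w ^ (2 ^ j - 1) = 1"
  shows "w ^ (2 ^ gcd m j - 1) = 1"
proof -
  have "w ^ 2 ^ j = w"
    using assms(3) power_two_pow_split[of w j] by simp
  then have "w ^ 2 ^ gcd m j = w"
    using assms(1) power_fixed_exp_gcd[of w 2 m j] by (simp add: Fq_def)
  then show ?thesis
    using assms(2) power_two_pow_split[of w "gcd m j"] by simp
qed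

lemma gf_norm_eq_1_imp_power_pred:
  fixes a :: 'a and j :: nat
  assumes a: "a \<in> Fq" and N: "gf_norm m (gcd m j) a = 1"
  obtains z where "z \<in> Fq" "z \<noteq> 0" "z ^ (2 ^ j - 1) = a"
proof -
  define d where "d = gcd m j"
  define e where "e = (2 ^ m - 1) div (2 ^ d - 1 :: nat)"
  define Fs where "Fs = Fq - {0}"
  define \<phi> where "\<phi> z = z ^ (2 ^ j - 1)" for z :: 'a
  have d: "0 < d" "d dvd m" "d dvd j" using m_pos unfolding d_def by auto
  have e: "e * (2 ^ d - 1) = 2 ^ m - 1"
    unfolding e_def using power_pred_dvd_power_pred[OF d(2)] by simp
  have d_pred: "0 < (2::nat) ^ d - 1" using one_less_power[of "2::nat" d] d(1) by simp
  have fibre: "card {z\<in>Fs. \<phi> z = y} \<le> 2 ^ d - 1" if y: "y \<in> \<phi> ` Fs" for y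
  proof -
    obtain z0 where z0: "z0 \<in> Fs" "y = \<phi> z0" using y by blast
    have "inj_on (\<lambda>z. z / z0) {z\<in>Fs. \<phi> z = y}" using z0 by (auto simp: Fs_def inj_on_def)
    moreover have "(\<lambda>z. z / z0) ` {z\<in>Fs. \<phi> z = y} \<subseteq> {w. w ^ (2 ^ d - 1) = 1}"
    proof (rule image_subsetI)
      fix z assume z: "z \<in> {z\<in>Fs. \<phi> z = y}"
      then have "(z / z0) ^ (2 ^ j - 1) = 1" using z0 by (auto simp: Fs_def \<phi>_def power_divide)
      then show "z / z0 \<in> {w. w ^ (2 ^ d - 1) = 1}"
        using z z0 Fq_power_pred_eq_1_gcd[of "z / z0" j] unfolding d_def
        by (auto simp: Fs_def Fq_divide)
    qed
    ultimately have "card {z\<in>Fs. \<phi> z = y} \<le> card {w::'a. w ^ (2 ^ d - 1) = 1}"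
      by (intro card_inj_on_le) auto
    then show ?thesis using card_roots_power_eq_le[OF d_pred, where c = "1::'a"] by linarith
  qed
  have "card Fs = q - 1" using card_Fq by (simp add: Fs_def)
  then have "e * (2 ^ d - 1) \<le> card (\<phi> ` Fs) * (2 ^ d - 1)"
    using card_le_card_image_mult[of Fs \<phi>] fibre e by (simp add: Fs_def)
  then have e_le: "e \<le> card (\<phi> ` Fs)" using d_pred by simp
  have image: "\<phi> ` Fs \<subseteq> {y. y ^ e = 1}"
  proof
    fix y assume "y \<in> \<phi> ` Fs"
    then obtain z where z: "z \<in> Fq" "z \<noteq> 0" "y = \<phi> z" by (auto simp: Fs_def)
    obtain s where s: "2 ^ j - 1 = (2 ^ d - 1) * (s :: nat)"
      using power_pred_dvd_power_pred[OF d(3)] by blast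
    have "(2 ^ j - 1) * e = s * (e * (2 ^ d - 1))" unfolding s by (simp only: ac_simps)
    also have "\<dots> = (q - 1) * s" unfolding e by (rule mult.commute)
    finally have "y ^ e = (z ^ (q - 1)) ^ s" using z(3) by (simp add: \<phi>_def flip: power_mult)
    then show "y \<in> {y. y ^ e = 1}" using Fq_power_q_pred[OF z(1,2)] by simp
  qed
  have "0 < e" using e q_gt_1 by (metis diff_is_0_eq gr0I leD mult_0)
  then have "card {y::'a. y ^ e = 1} \<le> e" by (rule card_roots_power_eq_le)
  moreover have "card (\<phi> ` Fs) \<le> card {y::'a. y ^ e = 1}" using image by (intro card_mono) auto
  ultimately have "card (\<phi> ` Fs) = card {y::'a. y ^ e = 1}" using e_le by linarith
  then have "\<phi> ` Fs = {y. y ^ e = 1}" by (rule card_subset_eq[OF _ image, simplified])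
  moreover have "a \<in> {y. y ^ e = 1}" using N unfolding e_def d_def gf_norm_def by simp
  ultimately have "a \<in> \<phi> ` Fs" by simp
  then obtain z where "z \<in> Fs" "a = \<phi> z" by (rule imageE)
  then show ?thesis using that by (auto simp: Fs_def \<phi>_def)
qed

end

section \<open>Permutations of the form G (trace x + \<delta>) + x\<close>

locale trace_reduction = gf_q_squared m for m :: nat +
  fixes G :: "'a::{field,finite} \<Rightarrow> 'a" and \<delta> A B C :: 'a and i :: nat
  assumes A_Fq: "A \<in> Fq" and B_Fq: "B \<in> Fq" and C_Fq: "C \<in> Fq"
    and trace_G: "\<And>z. z \<in> Fq \<Longrightarrow> trace (G (z + \<delta>)) = A * z ^ 2 ^ i + B * z + z + C"
begin

definition perm_poly :: "'a \<Rightarrow> 'a" where "perm_poly x = G (trace x + \<delta>) + x"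

lemma trace_perm_poly: "trace (perm_poly x) = A * trace x ^ 2 ^ i + B * trace x + C"
proof -
  have "trace (perm_poly x) = trace (G (trace x + \<delta>)) + trace x"
    by (simp add: perm_poly_def trace_add)
  also have "\<dots> = A * trace x ^ 2 ^ i + B * trace x + C + (trace x + trace x)"
    using trace_G[OF trace_in_Fq] by (simp add: ac_simps)
  finally show ?thesis by simp
qed

lemma perm_poly_inverse_from_section:
  assumes S: "\<And>c. S c \<in> Fq" "\<And>c. A * S c ^ 2 ^ i + B * S c + C = trace c"
  shows "bij perm_poly \<and> is_comp_inverse perm_poly (\<lambda>c. G (S c + \<delta>) + c)"
proof -
  have right_inverse: "perm_poly (G (S c + \<delta>) + c) = c" for c
  proof -
    have "trace (G (S c + \<delta>) + c) = trace (G (S c + \<delta>)) + trace c" by (rule trace_add)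
    also have "\<dots> = S c"
      using trace_G[OF S(1)] S(2)[of c, symmetric] by (simp add: ac_simps)
    finally show ?thesis by (simp add: perm_poly_def)
  qed
  then have "surj perm_poly" by (rule surjI)
  then have "inj perm_poly" by (simp add: finite_UNIV_surj_inj)
  then have "G (S (perm_poly c) + \<delta>) + perm_poly c = c" for c
    using right_inverse[of "perm_poly c"] by (simp add: inj_eq)
  then show ?thesis
    using right_inverse \<open>inj perm_poly\<close> \<open>surj perm_poly\<close> by (simp add: is_comp_inverse_def bij_def)
qed

lemma bij_perm_poly_imp_inj_on:
  assumes "bij perm_poly"
  shows "inj_on (\<lambda>z. A * z ^ 2 ^ i + B * z) Fq"
proof -
  have "(\<lambda>z. A * z ^ 2 ^ i + B * z + C) ` Fq = trace ` range perm_poly"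
    by (simp add: range_trace[symmetric] image_image trace_perm_poly)
  also have "\<dots> = Fq" using assms by (simp add: bij_def range_trace)
  finally have "inj_on (\<lambda>z. A * z ^ 2 ^ i + B * z + C) Fq"
    by (intro eq_card_imp_inj_on) simp_all
  then show ?thesis by (auto simp: inj_on_def)
qed

lemma perm_poly_inverse_scalar:
  assumes X: "X \<in> Fq" "X \<noteq> 0" and L: "\<And>z. z \<in> Fq \<Longrightarrow> A * z ^ 2 ^ i + B * z = X * z"
  shows "bij perm_poly \<and>
    is_comp_inverse perm_poly (\<lambda>x. G (inverse X * trace x + inverse X * C + \<delta>) + x)"
proof (rule perm_poly_inverse_from_section)
  fix c
  let ?S = "inverse X * trace c + inverse X * C"
  show S: "?S \<in> Fq"
    using X C_Fq trace_in_Fq by (intro Fq_closed)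
  have "A * ?S ^ 2 ^ i + B * ?S + C = X * ?S + C" by (simp only: L[OF S])
  also have "\<dots> = trace c"
    using X(2) by (simp add: distrib_left add.assoc flip: mult.assoc)
  finally show "A * ?S ^ 2 ^ i + B * ?S + C = trace c" .
qed

lemma bij_perm_poly_iff_scalar:
  assumes "\<forall>z\<in>Fq. z ^ 2 ^ i = z"
  shows "(bij perm_poly \<longleftrightarrow> A + B \<noteq> 0) \<and>
    (A + B \<noteq> 0 \<longrightarrow>
      is_comp_inverse perm_poly (\<lambda>x. G (inverse (A + B) * trace x + inverse (A + B) * C + \<delta>) + x))"
proof -
  have L: "A * z ^ 2 ^ i + B * z = (A + B) * z" if "z \<in> Fq" for z
    using assms that by (simp add: distrib_right)
  have "A + B \<noteq> 0" if bij: "bij perm_poly"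
  proof
    assume "A + B = 0"
    then have "A * 1 ^ 2 ^ i + B * 1 = A * 0 ^ 2 ^ i + B * 0"
      using L[of 1] L[of 0] by simp
    then have "(1::'a) = 0"
      by (rule inj_onD[OF bij_perm_poly_imp_inj_on[OF bij]]) simp_all
    then show False by simp
  qed
  moreover have "A + B \<noteq> 0 \<Longrightarrow> bij perm_poly \<and> is_comp_inverse perm_poly
      (\<lambda>x. G (inverse (A + B) * trace x + inverse (A + B) * C + \<delta>) + x)"
    by (rule perm_poly_inverse_scalar[OF Fq_add[OF A_Fq B_Fq] _ L])
  ultimately show ?thesis by blast
qed

lemma perm_poly_inverse_A_zero:
  assumes "A = 0" "B \<noteq> 0"
  shows "bij perm_poly \<and>
    is_comp_inverse perm_poly (\<lambda>x. G (inverse B * trace x + inverse B * C + \<delta>) + x)"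
  using assms by (intro perm_poly_inverse_scalar B_Fq) simp_all

lemma perm_poly_inverse_B_zero:
  assumes A: "A \<noteq> 0" and B: "B = 0"
  defines "e \<equiv> 2 ^ (m - i mod m) :: nat"
  shows "bij perm_poly \<and> is_comp_inverse perm_poly
    (\<lambda>x. G (inverse A ^ e * trace x ^ e + (C / A) ^ e + \<delta>) + x)"
proof (rule perm_poly_inverse_from_section)
  fix c
  define w where "w = (trace c + C) / A"
  have w: "w \<in> Fq" unfolding w_def using A_Fq C_Fq trace_in_Fq by (intro Fq_closed)
  have S: "inverse A ^ e * trace c ^ e + (C / A) ^ e = w ^ e"
    unfolding w_def e_def by (simp add: frobenius_add power_mult_distrib divide_inverse ring_distribs ac_simps)
  show "inverse A ^ e * trace c ^ e + (C / A) ^ e \<in> Fq" unfolding S using w by (rule Fq_power)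
  have "(w ^ e) ^ 2 ^ i = w ^ (e * 2 ^ (i mod m))"
    using Fq_power_exp_mod[OF Fq_power[OF w]] by (simp add: power_mult)
  also have "e * 2 ^ (i mod m) = q"
    unfolding e_def using m_pos by (simp flip: power_add)
  finally have "(w ^ e) ^ 2 ^ i = w" using w by (simp add: Fq_def)
  then show "A * (inverse A ^ e * trace c ^ e + (C / A) ^ e) ^ 2 ^ i
      + B * (inverse A ^ e * trace c ^ e + (C / A) ^ e) + C = trace c"
    unfolding S using A B by (simp add: w_def add.assoc)
qed

lemma bij_perm_poly_iff_norm:
  assumes j: "i mod m \<noteq> 0" and A: "A \<noteq> 0" and B: "B \<noteq> 0"
  defines "j \<equiv> i mod m"
  defines "N \<equiv> gf_norm m (gcd m j) (B / A)"
  shows "(bij perm_poly \<longleftrightarrow> N \<noteq> 1) \<and>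
    (N \<noteq> 1 \<longrightarrow> is_comp_inverse perm_poly
      (\<lambda>x. G (\<delta> + N / (1 + N) *
        (\<Sum>k<m div gcd m j. (A / B) ^ ((2 ^ ((k + 1) * j) - 1) div (2 ^ j - 1))
                              * (trace x / A + C / A) ^ 2 ^ (k * j))) + x))"
proof -
  have a: "B / A \<in> Fq" "B / A \<noteq> 0" using A B A_Fq B_Fq by (simp_all add: Fq_divide)
  have L: "A * z ^ 2 ^ i + B * z = A * (z ^ 2 ^ j + B / A * z)" if "z \<in> Fq" for z
    using A Fq_power_exp_mod[OF that, of i] by (simp add: j_def distrib_left)
  have "\<not> bij perm_poly" if N: "N = 1"
  proof
    assume bij: "bij perm_poly"
    obtain z where z: "z \<in> Fq" "z \<noteq> 0" "z ^ (2 ^ j - 1) = B / A"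
      using gf_norm_eq_1_imp_power_pred[OF a(1)] N unfolding N_def by blast
    have "z ^ 2 ^ j = B / A * z" using z(3) power_two_pow_split[of z j] by simp
    then have "A * z ^ 2 ^ i + B * z = A * 0 ^ 2 ^ i + B * 0"
      using L[OF z(1)] by simp
    then have "z = 0"
      by (rule inj_onD[OF bij_perm_poly_imp_inj_on[OF bij]]) (simp_all add: z(1))
    then show False using z(2) by simp
  qed
  moreover have "bij perm_poly \<and> is_comp_inverse perm_poly
      (\<lambda>x. G (\<delta> + N / (1 + N) *
        (\<Sum>k<m div gcd m j. (A / B) ^ ((2 ^ ((k + 1) * j) - 1) div (2 ^ j - 1))
                              * (trace x / A + C / A) ^ 2 ^ (k * j))) + x)"
    if N: "N \<noteq> 1"
  proof -
    have "bij perm_poly \<and> is_comp_inverse perm_poly (\<lambda>c. G (N / (1 + N) *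
        (\<Sum>k<m div gcd m j. inverse (B / A) ^ ((2 ^ ((k + 1) * j) - 1) div (2 ^ j - 1))
                              * (trace c / A + C / A) ^ 2 ^ (k * j)) + \<delta>) + c)"
    proof (rule perm_poly_inverse_from_section)
      fix c
      let ?S = "N / (1 + N) * (\<Sum>k<m div gcd m j.
        inverse (B / A) ^ ((2 ^ ((k + 1) * j) - 1) div (2 ^ j - 1)) * (trace c / A + C / A) ^ 2 ^ (k * j))"
      have v: "trace c / A + C / A \<in> Fq" using A_Fq C_Fq trace_in_Fq by (intro Fq_closed)
      have "0 < j" using j unfolding j_def by simp
      note sol = linearized_binomial_solution[OF a v \<open>0 < j\<close> N[unfolded N_def], folded N_def]
      show S: "?S \<in> Fq" by (rule sol(1))
      have "A * ?S ^ 2 ^ i + B * ?S = A * (trace c / A + C / A)" by (simp only: L[OF S] sol(2))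
      also have "\<dots> = trace c + C" using A by (simp add: distrib_left)
      finally show "A * ?S ^ 2 ^ i + B * ?S + C = trace c" by (simp add: add.assoc)
    qed
    then show ?thesis by (simp add: add.commute)
  qed
  ultimately show ?thesis by blast
qed

end

theorem theorem3p16:
  fixes m i :: nat and \<delta> b1 b2 b3 :: "'a::{field,finite}"
  assumes m_pos: "0 < m"
    and card: "card (UNIV :: 'a set) = 2 ^ (2 * m)"
    and b1: "b1 ^ (2 ^ m) = b1" and b2: "b2 ^ (2 ^ m) = b2"
    and i_lt: "i < 2 * m"
  defines "q \<equiv> (2::nat) ^ m"
    and "j \<equiv> i mod m"
  defines "d \<equiv> gcd m j"
    and "P \<equiv> (\<lambda>x::'a. b1 * (x ^ q + x + \<delta>) ^ (2 ^ i + q) + b2 * (x ^ q + x + \<delta>) ^ (2 ^ i + 1)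
                       + b3 * (x ^ q + x + \<delta>) ^ (2 ^ i) + x)"
    and "A \<equiv> (\<delta> + \<delta> ^ q) * (b1 + b2) + b3 + b3 ^ q"
    and "B \<equiv> 1 + (\<delta> ^ (2 ^ i * q) + \<delta> ^ (2 ^ i)) * (b1 + b2)"
    and "C \<equiv> b1 * (\<delta> ^ (2 ^ i * q + 1) + \<delta> ^ (2 ^ i + q)) + b2 * (\<delta> ^ (2 ^ i * q + q) + \<delta> ^ (2 ^ i + 1))
             + b3 ^ q * \<delta> ^ (2 ^ i * q) + b3 * \<delta> ^ (2 ^ i)"
    and "G \<equiv> (\<lambda>y::'a. b1 * y ^ (2 ^ i + q) + b2 * y ^ (2 ^ i + 1) + b3 * y ^ (2 ^ i))"
  shows
    "(i \<in> {0, m} \<longrightarrow>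
        ((bij P \<longleftrightarrow> A + B \<noteq> 0) \<and>
         (A + B \<noteq> 0 \<longrightarrow> is_comp_inverse P
            (\<lambda>x. G (inverse (A + B) * (x ^ q + x) + inverse (A + B) * C + \<delta>) + x))))
   \<and> (i \<notin> {0, m} \<and> A = 0 \<and> B \<noteq> 0 \<longrightarrow>
        bij P \<and> is_comp_inverse P (\<lambda>x. G (inverse B * (x ^ q + x) + inverse B * C + \<delta>) + x))
   \<and> (i \<notin> {0, m} \<and> A \<noteq> 0 \<and> B = 0 \<longrightarrow>
        bij P \<and> is_comp_inverse P
          (\<lambda>x. G (inverse A ^ (2 ^ (m - j)) * (x ^ q + x) ^ (2 ^ (m - j)) + (C / A) ^ (2 ^ (m - j)) + \<delta>) + x))
   \<and> (i \<notin> {0, m} \<and> A * B \<noteq> 0 \<longrightarrow>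
        ((bij P \<longleftrightarrow> gf_norm m d (B / A) \<noteq> 1) \<and>
         (gf_norm m d (B / A) \<noteq> 1 \<longrightarrow> is_comp_inverse P
            (\<lambda>x. G (\<delta> + gf_norm m d (B / A) / (1 + gf_norm m d (B / A)) *
                 (\<Sum>k<m div d. (A / B) ^ ((2 ^ ((k + 1) * j) - 1) div (2 ^ j - 1))
                                 * ((x ^ q + x) / A + C / A) ^ (2 ^ (k * j)))) + x))))"
proof -
  interpret gf_q_squared m
    using m_pos card by unfold_locales
  have b: "b1 \<in> Fq" "b2 \<in> Fq" using b1 b2 by (simp_all add: Fq_def)
  interpret trace_reduction m G \<delta> A B C i
  proof
    show "A \<in> Fq" "B \<in> Fq" "C \<in> Fq"
      unfolding A_def B_def C_def q_def by (fact power_form_coefficients_in_Fq[OF b])+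
    show "trace (G (z + \<delta>)) = A * z ^ 2 ^ i + B * z + z + C" if "z \<in> Fq" for z
      using trace_power_form[OF b that] unfolding G_def A_def B_def C_def q_def
      by (simp add: algebra_simps)
  qed
  have "P = perm_poly"
    unfolding perm_poly_def[abs_def] by (simp add: P_def G_def trace_def q_def)
  then show ?thesis
    unfolding d_def j_def q_def
    using bij_perm_poly_iff_scalar[OF Fq_power_trivial] perm_poly_inverse_A_zero
      perm_poly_inverse_B_zero bij_perm_poly_iff_norm[OF mod_neq_0_if_below_double[OF i_lt]]
    by (simp add: trace_def)
qed

end
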